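(* Let $(X,d)$ be a metric space and let $F$ be a semiflow on $X$ with strong compact dynamics, with strong global attractor $\mathcal G$. If $x\in\mathcal G$, $y\in X$ and $x\succcurlyeq_{\mathcal S} y$, then $y\in\mathcal G$.
   Context: A semiflow on a metric space $(X,d)$ is a continuous map $F:[0,\infty)\times X\to X$, $(t,x)\mapsto F^t(x)$, with $F^0=\mathrm{id}$ and $F^{t+s}=F^t\circ F^s$. A curve is piecewise continuous if it is continuous except at finitely many points, at which one-sided limits exist. For $T\ge1$, a piecewise continuous curve $\gamma:[0,T]\to X$ is $\varepsilon$-close to $F$ if $d(\gamma(t+\tau),F^\tau(\gamma(t)))<\varepsilon$ for every $\tau\in[0,1]$ and $t\in[0,T-\tau]$. An $\varepsilon$-chain from $x$ to $y$ is a piecewise continuous $\gamma:[0,T]\to X$, $T\ge 1$, with $\gamma(0)=x$, $\gamma(T)=y$, $\gamma$ $\varepsilon$-close to $F$. Write $x\succcurlyeq_{\mathcal S} y$ if for every $\varepsilon>0$ there is an $\varepsilon$-chain from $x$ to $y$. For $G\subset X$, $N_\varepsilon(G)=\{y: d(y,G)<\varepsilon\}$ and $W_\varepsilon(G)=\bigcup_{t\ge0}F^t(N_\varepsilon(G))$. A set $G$ attracts $K$ if for every $\varepsilon>0$ there is $T>0$ with $F^t(K)\subset N_\varepsilon(G)$ for all $t\ge T$. The global attractor $\mathcal G$ of $F$, if it exists, is a maximal invariant compact subset of $X$ attracting every compact $K\subset X$. It is strong if there is $\varepsilon>0$ such that $\mathcal G$ attracts $N_\varepsilon(\mathcal G)$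 and the map $(t,z)\mapsto F^t(z)$ is uniformly continuous on $[0,1]\times W_\varepsilon(\mathcal G)$. $F$ has strong compact dynamics if it has a strong global attractor. *)

theory Defs
  imports "HOL-Analysis.Analysis"
begin

text \<open>The metric space X is the whole carrier of a type of class metric_space;
  a semiflow is F :: real => 'a => 'a, where only times t >= 0 matter.\<close>

definition semiflow :: "(real \<Rightarrow> 'a::metric_space \<Rightarrow> 'a) \<Rightarrow> bool" where
  "semiflow F \<longleftrightarrow>
     continuous_on ({0..} \<times> UNIV) (\<lambda>(t, x). F t x) \<and>
     F 0 = id \<and>
     (\<forall>t s. t \<ge> 0 \<longrightarrow> s \<ge> 0 \<longrightarrow> F (t + s) = F t \<circ> F s)"

definition piecewise_cont :: "real \<Rightarrow> (real \<Rightarrow> 'a::metric_space) \<Rightarrow> bool" where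
  "piecewise_cont T \<gamma> \<longleftrightarrow>
     (\<exists>S. finite S \<and>
        (\<forall>t\<in>{0..T} - S. continuous (at t within {0..T}) \<gamma>) \<and>
        (\<forall>t\<in>S \<inter> {0..T}. (0 < t \<longrightarrow> (\<exists>l. (\<gamma> \<longlongrightarrow> l) (at_left t))) \<and>
                       (t < T \<longrightarrow> (\<exists>l. (\<gamma> \<longlongrightarrow> l) (at_right t)))))"

definition eps_close :: "(real \<Rightarrow> 'a::metric_space \<Rightarrow> 'a) \<Rightarrow> real \<Rightarrow> real \<Rightarrow> (real \<Rightarrow> 'a) \<Rightarrow> bool" where
  "eps_close F \<epsilon> T \<gamma> \<longleftrightarrow>
     (\<forall>\<tau>\<in>{0..1}. \<forall>t\<in>{0..T - \<tau>}. dist (\<gamma> (t + \<tau>)) (F \<tau> (\<gamma> t)) < \<epsilon>)"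

definition eps_chain :: "(real \<Rightarrow> 'a::metric_space \<Rightarrow> 'a) \<Rightarrow> real \<Rightarrow> real \<Rightarrow> (real \<Rightarrow> 'a) \<Rightarrow> 'a \<Rightarrow> 'a \<Rightarrow> bool" where
  "eps_chain F \<epsilon> T \<gamma> x y \<longleftrightarrow>
     T \<ge> 1 \<and> piecewise_cont T \<gamma> \<and> \<gamma> 0 = x \<and> \<gamma> T = y \<and> eps_close F \<epsilon> T \<gamma>"

definition chain_succ :: "(real \<Rightarrow> 'a::metric_space \<Rightarrow> 'a) \<Rightarrow> 'a \<Rightarrow> 'a \<Rightarrow> bool" where
  "chain_succ F x y \<longleftrightarrow> (\<forall>\<epsilon>>0. \<exists>T \<gamma>. eps_chain F \<epsilon> T \<gamma> x y)"

definition nbhd :: "real \<Rightarrow> 'a::metric_space set \<Rightarrow> 'a set" where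
  "nbhd \<epsilon> G = {y. \<exists>g\<in>G. dist y g < \<epsilon>}"

definition W_set :: "(real \<Rightarrow> 'a::metric_space \<Rightarrow> 'a) \<Rightarrow> real \<Rightarrow> 'a set \<Rightarrow> 'a set" where
  "W_set F \<epsilon> G = (\<Union>t\<in>{0..}. F t ` nbhd \<epsilon> G)"

definition attracts :: "(real \<Rightarrow> 'a::metric_space \<Rightarrow> 'a) \<Rightarrow> 'a set \<Rightarrow> 'a set \<Rightarrow> bool" where
  "attracts F G K \<longleftrightarrow> (\<forall>\<epsilon>>0. \<exists>T>0. \<forall>t\<ge>T. F t ` K \<subseteq> nbhd \<epsilon> G)"

definition invariant :: "(real \<Rightarrow> 'a \<Rightarrow> 'a) \<Rightarrow> 'a set \<Rightarrow> bool" where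
  "invariant F A \<longleftrightarrow> (\<forall>t\<ge>0. F t ` A = A)"

definition global_attractor :: "(real \<Rightarrow> 'a::metric_space \<Rightarrow> 'a) \<Rightarrow> 'a set \<Rightarrow> bool" where
  "global_attractor F G \<longleftrightarrow>
     compact G \<and> invariant F G \<and>
     (\<forall>A. compact A \<and> invariant F A \<longrightarrow> A \<subseteq> G) \<and>
     (\<forall>K. compact K \<longrightarrow> attracts F G K)"

definition strong_global_attractor :: "(real \<Rightarrow> 'a::metric_space \<Rightarrow> 'a) \<Rightarrow> 'a set \<Rightarrow> bool" where
  "strong_global_attractor F G \<longleftrightarrow>
     global_attractor F G \<and>
     (\<exists>\<epsilon>>0. attracts F G (nbhd \<epsilon> G) \<and>
        uniformly_continuous_on ({0..1} \<times> W_set F \<epsilon> G) (\<lambda>(t, z). F t z))"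

end

(* Let W be the forward invariant set W_e(G) on which F is uniformly continuous for times in
   [0,1]. Iterating, the maps F t with t in [0,n] are uniformly equicontinuous on W; combined
   with the attraction of the e-neighbourhood this makes G Lyapunov stable, and it lets an
   \<epsilon>-close curve starting near G shadow the true orbit up to any fixed time n. Take n so
   large that orbits from the \<rho>-neighbourhood of G enter the \<rho>/2-neighbourhood by time n,
   and \<epsilon> so small that the shadowing error is below \<rho>/2. Then an \<epsilon>-chain starting in G
   is back in the \<rho>-neighbourhood at the times 0, n, 2n, ..., and in between never leaves
   the r-neighbourhood. So the end point y lies in every neighbourhood of G, i.e. in its
   closure, which is G as G is compact. *)

theory Submission
  imports Defs
begin

definition uniformly_equicontinuous_on ::
    "'t set \<Rightarrow> 'a::metric_space set \<Rightarrow> ('t \<Rightarrow> 'a \<Rightarrow> 'b::metric_space) \<Rightarrow> bool" where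
  "uniformly_equicontinuous_on I W F \<longleftrightarrow>
     (\<forall>\<eta>>0. \<exists>\<delta>>0. \<forall>t\<in>I. \<forall>z\<in>W. \<forall>z'\<in>W. dist z z' < \<delta> \<longrightarrow> dist (F t z) (F t z') < \<eta>)"

lemma uniformly_equicontinuous_onD:
  assumes "uniformly_equicontinuous_on I W F" "0 < \<eta>"
  obtains \<delta> where "0 < \<delta>"
    "\<And>t z z'. t \<in> I \<Longrightarrow> z \<in> W \<Longrightarrow> z' \<in> W \<Longrightarrow> dist z z' < \<delta> \<Longrightarrow> dist (F t z) (F t z') < \<eta>"
  using assms unfolding uniformly_equicontinuous_on_def by metis

lemma uniformly_continuous_on_imp_uniformly_equicontinuous_on:
  fixes F :: "'t::metric_space \<Rightarrow> 'a::metric_space \<Rightarrow> 'b::metric_space"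
  assumes "uniformly_continuous_on (I \<times> W) (\<lambda>(t, z). F t z)"
  shows "uniformly_equicontinuous_on I W F"
  unfolding uniformly_equicontinuous_on_def
proof (intro allI impI)
  fix \<eta> :: real assume "0 < \<eta>"
  then obtain \<delta> where "0 < \<delta>" and \<delta>: "\<forall>p\<in>I \<times> W. \<forall>p'\<in>I \<times> W. dist p' p < \<delta> \<longrightarrow>
      dist ((\<lambda>(t, z). F t z) p') ((\<lambda>(t, z). F t z) p) < \<eta>"
    using assms unfolding uniformly_continuous_on_def by metis
  have "dist (F t z) (F t z') < \<eta>" if "t \<in> I" "z \<in> W" "z' \<in> W" "dist z z' < \<delta>" for t z z'
    using \<delta>[rule_format, of "(t, z')" "(t, z)"] that by (simp add: dist_Pair_Pair)
  with \<open>0 < \<delta>\<close> show "\<exists>\<delta>>0. \<forall>t\<in>I. \<forall>z\<in>W. \<forall>z'\<in>W. dist z z' < \<delta> \<longrightarrow> dist (F t z) (F t z') < \<eta>"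
    by blast
qed

lemma semiflow_zero: "semiflow F \<Longrightarrow> F 0 z = z"
  unfolding semiflow_def by simp

lemma semiflow_add: "semiflow F \<Longrightarrow> 0 \<le> t \<Longrightarrow> 0 \<le> s \<Longrightarrow> F (t + s) z = F t (F s z)"
  unfolding semiflow_def by simp

lemma uniformly_equicontinuous_on_semiflow_nat:
  assumes "semiflow F" and unit: "uniformly_equicontinuous_on {0..1} W F"
    and forward: "\<And>z. z \<in> W \<Longrightarrow> F 1 z \<in> W"
  shows "uniformly_equicontinuous_on {0..real n} W F"
proof (induction n)
  case 0
  then show ?case
    using \<open>semiflow F\<close> by (auto simp: uniformly_equicontinuous_on_def semiflow_zero)
next
  case (Suc k)
  show ?case
    unfolding uniformly_equicontinuous_on_def
  proof (intro allI impI)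
    fix \<eta> :: real assume "0 < \<eta>"
    obtain \<delta>\<^sub>k where "0 < \<delta>\<^sub>k" and \<delta>\<^sub>k: "\<And>t z z'. t \<in> {0..real k} \<Longrightarrow> z \<in> W \<Longrightarrow> z' \<in> W \<Longrightarrow>
        dist z z' < \<delta>\<^sub>k \<Longrightarrow> dist (F t z) (F t z') < \<eta>"
      using uniformly_equicontinuous_onD[OF Suc.IH \<open>0 < \<eta>\<close>] by blast
    obtain \<delta>\<^sub>1 where "0 < \<delta>\<^sub>1" and \<delta>\<^sub>1: "\<And>t z z'. t \<in> {0..1} \<Longrightarrow> z \<in> W \<Longrightarrow> z' \<in> W \<Longrightarrow>
        dist z z' < \<delta>\<^sub>1 \<Longrightarrow> dist (F t z) (F t z') < min \<eta> \<delta>\<^sub>k"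
      using uniformly_equicontinuous_onD[OF unit, of "min \<eta> \<delta>\<^sub>k"] \<open>0 < \<eta>\<close> \<open>0 < \<delta>\<^sub>k\<close> by auto
    have "dist (F t z) (F t z') < \<eta>"
      if "t \<in> {0..real (Suc k)}" "z \<in> W" "z' \<in> W" "dist z z' < \<delta>\<^sub>1" for t z z'
    proof (cases "t \<le> 1")
      case True
      then show ?thesis using \<delta>\<^sub>1[of t z z'] that by fastforce
    next
      case False
      have "dist (F (t - 1) (F 1 z)) (F (t - 1) (F 1 z')) < \<eta>"
        using \<delta>\<^sub>k \<delta>\<^sub>1[of 1 z z'] forward that False by fastforce
      then show ?thesis
        using semiflow_add[OF \<open>semiflow F\<close>, of "t - 1" 1] False by simp
    qed
    with \<open>0 < \<delta>\<^sub>1\<close> show "\<exists>\<delta>>0. \<forall>t\<in>{0..real (Suc k)}. \<forall>z\<in>W. \<forall>z'\<in>W.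
        dist z z' < \<delta> \<longrightarrow> dist (F t z) (F t z') < \<eta>"
      by blast
  qed
qed

lemma nbhd_mono: "a \<le> b \<Longrightarrow> nbhd a G \<subseteq> nbhd b G"
  unfolding nbhd_def by force

lemma subset_nbhd: "0 < a \<Longrightarrow> G \<subseteq> nbhd a G"
  unfolding nbhd_def by force

lemma nbhd_triangle:
  assumes "z \<in> nbhd a G" "dist w z < b"
  shows "w \<in> nbhd (a + b) G"
proof -
  obtain g where "g \<in> G" "dist z g < a"
    using assms(1) unfolding nbhd_def by blast
  moreover have "dist w g \<le> dist w z + dist z g"
    by (rule dist_triangle)
  ultimately show ?thesis
    using assms(2) unfolding nbhd_def by force
qed

lemma nbhd_subset_W_set: "semiflow F \<Longrightarrow> nbhd e G \<subseteq> W_set F e G"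
  unfolding W_set_def by (force simp: semiflow_zero)

lemma W_set_forward_invariant:
  assumes "semiflow F" "0 \<le> t" "z \<in> W_set F e G"
  shows "F t z \<in> W_set F e G"
proof -
  obtain s w where "0 \<le> s" "w \<in> nbhd e G" "z = F s w"
    using assms(3) unfolding W_set_def by auto
  moreover have "F t (F s w) = F (t + s) w"
    using semiflow_add[OF assms(1)] assms(2) \<open>0 \<le> s\<close> by simp
  ultimately show ?thesis
    using assms(2) unfolding W_set_def by (auto intro!: bexI[of _ "t + s"])
qed

lemma eps_close_mono: "eps_close F \<epsilon> T \<gamma> \<Longrightarrow> \<epsilon> \<le> \<epsilon>' \<Longrightarrow> eps_close F \<epsilon>' T \<gamma>"
  unfolding eps_close_def by force

lemma eps_closeD:
  "eps_close F \<epsilon> T \<gamma> \<Longrightarrow> \<tau> \<in> {0..1} \<Longrightarrow> 0 \<le> t \<Longrightarrow> t + \<tau> \<le> T \<Longrightarrow>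
    dist (\<gamma> (t + \<tau>)) (F \<tau> (\<gamma> t)) < \<epsilon>"
  unfolding eps_close_def by simp

lemma eps_close_shift:
  assumes "eps_close F \<epsilon> T \<gamma>" "0 \<le> s"
  shows "eps_close F \<epsilon> (T - s) (\<lambda>t. \<gamma> (s + t))"
  unfolding eps_close_def
proof (intro ballI)
  fix \<tau> t assume "\<tau> \<in> {0..1::real}" "t \<in> {0..T - s - \<tau>}"
  then show "dist (\<gamma> (s + (t + \<tau>))) (F \<tau> (\<gamma> (s + t))) < \<epsilon>"
    using eps_closeD[OF assms(1), of \<tau> "s + t"] assms(2) by (simp add: add.assoc)
qed

lemma finite_time_shadowing:
  assumes "semiflow F" and unit: "uniformly_equicontinuous_on {0..1} W F"
    and orbit: "\<And>z t. z \<in> U \<Longrightarrow> 0 \<le> t \<Longrightarrow> F t z \<in> V"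
    and margin: "\<And>v w. v \<in> V \<Longrightarrow> dist w v < r \<Longrightarrow> w \<in> W"
    and "0 < \<eta>" "\<eta> \<le> r"
  shows "\<exists>\<epsilon>>0. \<forall>T \<gamma> u. eps_close F \<epsilon> T \<gamma> \<longrightarrow> \<gamma> 0 \<in> U \<longrightarrow> u \<in> {0..real n} \<longrightarrow> u \<le> T \<longrightarrow>
           dist (\<gamma> u) (F u (\<gamma> 0)) < \<eta>"
  using assms(5,6)
proof (induction n arbitrary: \<eta>)
  case 0
  then show ?case
    using \<open>semiflow F\<close> by (auto simp: semiflow_zero intro!: exI[of _ 1])
next
  case (Suc k)
  obtain \<delta> where "0 < \<delta>" and \<delta>: "\<And>\<tau> z z'. \<tau> \<in> {0..1} \<Longrightarrow> z \<in> W \<Longrightarrow> z' \<in> W \<Longrightarrow>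
      dist z z' < \<delta> \<Longrightarrow> dist (F \<tau> z) (F \<tau> z') < \<eta> / 2"
    using uniformly_equicontinuous_onD[OF unit, of "\<eta> / 2"] Suc.prems by auto
  \<comment> \<open>accuracy \<delta> up to time k keeps \<gamma> k in W and lets the unit-time step absorb the error\<close>
  have "0 < min \<delta> \<eta>" "min \<delta> \<eta> \<le> r"
    using \<open>0 < \<delta>\<close> Suc.prems by auto
  then obtain \<epsilon>\<^sub>k where "0 < \<epsilon>\<^sub>k" and IH: "\<And>T \<gamma> u. eps_close F \<epsilon>\<^sub>k T \<gamma> \<Longrightarrow> \<gamma> 0 \<in> U \<Longrightarrow>
      u \<in> {0..real k} \<Longrightarrow> u \<le> T \<Longrightarrow> dist (\<gamma> u) (F u (\<gamma> 0)) < min \<delta> \<eta>"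
    using Suc.IH by blast
  have "dist (\<gamma> u) (F u (\<gamma> 0)) < \<eta>"
    if close: "eps_close F (min \<epsilon>\<^sub>k (\<eta> / 2)) T \<gamma>" and "\<gamma> 0 \<in> U"
      and u: "u \<in> {0..real (Suc k)}" "u \<le> T" for T \<gamma> u
  proof -
    have close\<^sub>k: "eps_close F \<epsilon>\<^sub>k T \<gamma>"
      using close eps_close_mono by (metis min.cobounded1)
    show ?thesis
    proof (cases "u \<le> real k")
      case True
      then show ?thesis using IH[OF close\<^sub>k \<open>\<gamma> 0 \<in> U\<close>] u by fastforce
    next
      case False
      define \<tau> where "\<tau> = u - real k"
      have \<tau>: "\<tau> \<in> {0..1}" "real k + \<tau> = u"
        using False u unfolding \<tau>_def by auto
      have near: "dist (\<gamma> (real k)) (F (real k) (\<gamma> 0)) < min \<delta> \<eta>"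
        using IH[OF close\<^sub>k \<open>\<gamma> 0 \<in> U\<close>] False u by auto
      have orbit_k: "F (real k) (\<gamma> 0) \<in> V"
        using orbit[OF \<open>\<gamma> 0 \<in> U\<close>] by simp
      have "dist (F \<tau> (\<gamma> (real k))) (F \<tau> (F (real k) (\<gamma> 0))) < \<eta> / 2"
        using \<delta>[OF \<tau>(1)] margin[OF orbit_k] near Suc.prems by auto
      moreover have "F \<tau> (F (real k) (\<gamma> 0)) = F u (\<gamma> 0)"
        using semiflow_add[OF \<open>semiflow F\<close>, of \<tau> "real k"] \<tau> by (simp add: add.commute)
      moreover have "dist (\<gamma> u) (F \<tau> (\<gamma> (real k))) < \<eta> / 2"
        using eps_closeD[OF close \<tau>(1), of "real k"] \<tau> u by auto
      ultimately show ?thesis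
        using dist_triangle[of "\<gamma> u" "F u (\<gamma> 0)" "F \<tau> (\<gamma> (real k))"] by simp
    qed
  qed
  then show ?case
    using \<open>0 < \<epsilon>\<^sub>k\<close> Suc.prems by (intro exI[of _ "min \<epsilon>\<^sub>k (\<eta> / 2)"]) auto
qed

lemma last_grid_point:
  fixes h T :: real
  assumes "0 < h" "0 \<le> T" "P 0"
    and step: "\<And>s. 0 \<le> s \<Longrightarrow> s + h \<le> T \<Longrightarrow> P s \<Longrightarrow> P (s + h)"
  shows "\<exists>s. 0 \<le> s \<and> s \<le> T \<and> T < s + h \<and> P s"
proof -
  have grid: "real m * h \<le> T \<Longrightarrow> P (real m * h)" for m :: nat
  proof (induction m)
    case 0
    then show ?case using \<open>P 0\<close> by simp
  next
    case (Suc m)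
    then show ?case
      using step[of "real m * h"] \<open>0 < h\<close> by (simp add: algebra_simps)
  qed
  define m where "m = nat \<lfloor>T / h\<rfloor>"
  have "real m = of_int \<lfloor>T / h\<rfloor>"
    using assms(1,2) unfolding m_def by simp
  then have "real m \<le> T / h" "T / h < real m + 1"
    by linarith+
  then have "real m * h \<le> T" "T < real m * h + h"
    using \<open>0 < h\<close> by (simp_all add: pos_le_divide_eq pos_divide_less_eq algebra_simps)
  then show ?thesis
    using grid \<open>0 < h\<close> by (intro exI[of _ "real m * h"]) auto
qed

locale strongly_attracting_set =
  fixes F :: "real \<Rightarrow> 'a::metric_space \<Rightarrow> 'a" and G :: "'a set" and e :: real
  assumes semiflow: "semiflow F"
    and forward_invariant: "\<And>t. 0 \<le> t \<Longrightarrow> F t ` G \<subseteq> G"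
    and e_pos: "0 < e"
    and attracts_nbhd: "attracts F G (nbhd e G)"
    and uniformly_continuous: "uniformly_continuous_on ({0..1} \<times> W_set F e G) (\<lambda>(t, z). F t z)"
begin

lemma uniformly_equicontinuous_on_unit: "uniformly_equicontinuous_on {0..1} (W_set F e G) F"
  using uniformly_continuous uniformly_continuous_on_imp_uniformly_equicontinuous_on by blast

lemma uniformly_equicontinuous_on_nat: "uniformly_equicontinuous_on {0..real n} (W_set F e G) F"
  using uniformly_equicontinuous_on_semiflow_nat[OF semiflow uniformly_equicontinuous_on_unit]
  by (simp add: W_set_forward_invariant semiflow)

lemma attraction_time:
  assumes "0 < r"
  obtains n :: nat where "0 < n" "\<And>t. real n \<le> t \<Longrightarrow> F t ` nbhd e G \<subseteq> nbhd r G"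
proof -
  obtain T where "0 < T" and late: "\<And>t. T \<le> t \<Longrightarrow> F t ` nbhd e G \<subseteq> nbhd r G"
    using attracts_nbhd assms unfolding attracts_def by blast
  have "T \<le> real (nat \<lceil>T\<rceil>)" "0 < nat \<lceil>T\<rceil>"
    using \<open>0 < T\<close> by linarith+
  then show ?thesis
    using that late by (meson order_trans)
qed

lemma lyapunov_stable:
  assumes "0 < r"
  obtains \<rho> where "0 < \<rho>" "\<rho> \<le> e" "\<And>t. 0 \<le> t \<Longrightarrow> F t ` nbhd \<rho> G \<subseteq> nbhd r G"
proof -
  obtain n where late: "\<And>t. real n \<le> t \<Longrightarrow> F t ` nbhd e G \<subseteq> nbhd r G"
    using attraction_time[OF assms] by blast
  obtain \<delta> where "0 < \<delta>" and early: "\<And>t z z'. t \<in> {0..real n} \<Longrightarrow> z \<in> W_set F e G \<Longrightarrow>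
      z' \<in> W_set F e G \<Longrightarrow> dist z z' < \<delta> \<Longrightarrow> dist (F t z) (F t z') < r"
    using uniformly_equicontinuous_onD[OF uniformly_equicontinuous_on_nat assms] by blast
  have "F t z \<in> nbhd r G" if t: "0 \<le> t" and z: "z \<in> nbhd (min \<delta> e) G" for t z
  proof (cases "t \<le> real n")
    case True
    obtain g where g: "g \<in> G" "dist z g < min \<delta> e"
      using z unfolding nbhd_def by blast
    have "z \<in> nbhd e G" "g \<in> nbhd e G"
      using g subset_nbhd[OF e_pos] unfolding nbhd_def by auto
    then have "z \<in> W_set F e G" "g \<in> W_set F e G"
      using nbhd_subset_W_set[OF semiflow] by auto
    then have "dist (F t z) (F t g) < r"
      using early True t g(2) by auto
    moreover have "F t g \<in> G"
      using forward_invariant t g(1) by blast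
    ultimately show ?thesis
      unfolding nbhd_def by blast
  next
    case False
    then show ?thesis
      using late[of t] z nbhd_mono[of "min \<delta> e" e G] by auto
  qed
  then show ?thesis
    using that[of "min \<delta> e"] \<open>0 < \<delta>\<close> e_pos by auto
qed

lemma shadowing_near_attractor:
  assumes "0 < r" "r \<le> e"
  obtains \<rho> n \<epsilon> where "0 < \<rho>" "0 < n" "0 < \<epsilon>"
    "\<And>T \<gamma> u. eps_close F \<epsilon> T \<gamma> \<Longrightarrow> \<gamma> 0 \<in> nbhd \<rho> G \<Longrightarrow> u \<in> {0..real n} \<Longrightarrow> u \<le> T \<Longrightarrow>
      \<gamma> u \<in> nbhd r G"
    "\<And>T \<gamma>. eps_close F \<epsilon> T \<gamma> \<Longrightarrow> \<gamma> 0 \<in> nbhd \<rho> G \<Longrightarrow> real n \<le> T \<Longrightarrow>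
      \<gamma> (real n) \<in> nbhd \<rho> G"
proof -
  obtain \<rho> where "0 < \<rho>" "\<rho> \<le> e"
    and stable: "\<And>t. 0 \<le> t \<Longrightarrow> F t ` nbhd \<rho> G \<subseteq> nbhd (r/2) G"
    using lyapunov_stable[OF half_gt_zero[OF assms(1)]] by blast
  obtain n :: nat where "0 < n" and late: "\<And>t. real n \<le> t \<Longrightarrow> F t ` nbhd e G \<subseteq> nbhd (\<rho>/2) G"
    using attraction_time[OF half_gt_zero[OF \<open>0 < \<rho>\<close>]] by blast
  define \<eta> where "\<eta> = min (r/2) (\<rho>/2)"
  have "0 < \<eta>" "\<eta> \<le> r/2" "\<eta> \<le> \<rho>/2"
    using assms(1) \<open>0 < \<rho>\<close> unfolding \<eta>_def by auto
  have orbit: "F t z \<in> nbhd (r/2) G" if "z \<in> nbhd \<rho> G" "0 \<le> t" for z t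
    using stable[OF that(2)] that(1) by blast
  have margin: "w \<in> W_set F e G" if "v \<in> nbhd (r/2) G" "dist w v < r/2" for v w
  proof -
    have "w \<in> nbhd (r/2 + r/2) G"
      using nbhd_triangle[OF that] .
    then show ?thesis
      using nbhd_mono[of "r/2 + r/2" e G] assms(2) nbhd_subset_W_set[OF semiflow] by auto
  qed
  have "\<exists>\<epsilon>>0. \<forall>T \<gamma> u. eps_close F \<epsilon> T \<gamma> \<longrightarrow> \<gamma> 0 \<in> nbhd \<rho> G \<longrightarrow>
      u \<in> {0..real n} \<longrightarrow> u \<le> T \<longrightarrow> dist (\<gamma> u) (F u (\<gamma> 0)) < \<eta>"
    by (rule finite_time_shadowing[OF semiflow uniformly_equicontinuous_on_unit orbit margin
        \<open>0 < \<eta>\<close> \<open>\<eta> \<le> r/2\<close>])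
  then obtain \<epsilon> where "0 < \<epsilon>" and shadow: "\<forall>T \<gamma> u. eps_close F \<epsilon> T \<gamma> \<longrightarrow> \<gamma> 0 \<in> nbhd \<rho> G \<longrightarrow>
      u \<in> {0..real n} \<longrightarrow> u \<le> T \<longrightarrow> dist (\<gamma> u) (F u (\<gamma> 0)) < \<eta>"
    by blast
  show ?thesis
  proof (rule that[OF \<open>0 < \<rho>\<close> \<open>0 < n\<close> \<open>0 < \<epsilon>\<close>])
    fix T \<gamma> u
    assume "eps_close F \<epsilon> T \<gamma>" "\<gamma> 0 \<in> nbhd \<rho> G" "u \<in> {0..real n}" "u \<le> T"
    then have "dist (\<gamma> u) (F u (\<gamma> 0)) < \<eta>" "0 \<le> u"
      using shadow by auto
    then have "\<gamma> u \<in> nbhd (r/2 + \<eta>) G"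
      using nbhd_triangle[OF orbit[OF \<open>\<gamma> 0 \<in> nbhd \<rho> G\<close>]] by blast
    then show "\<gamma> u \<in> nbhd r G"
      using nbhd_mono[of "r/2 + \<eta>" r G] \<open>\<eta> \<le> r/2\<close> by auto
  next
    fix T \<gamma>
    assume close: "eps_close F \<epsilon> T \<gamma>" and start: "\<gamma> 0 \<in> nbhd \<rho> G" and "real n \<le> T"
    have "F (real n) (\<gamma> 0) \<in> nbhd (\<rho>/2) G"
      using late[of "real n"] start nbhd_mono[OF \<open>\<rho> \<le> e\<close>] by blast
    moreover have "dist (\<gamma> (real n)) (F (real n) (\<gamma> 0)) < \<eta>"
      using shadow close start \<open>real n \<le> T\<close> by auto
    ultimately have "\<gamma> (real n) \<in> nbhd (\<rho>/2 + \<eta>) G"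
      using nbhd_triangle by blast
    then show "\<gamma> (real n) \<in> nbhd \<rho> G"
      using nbhd_mono[of "\<rho>/2 + \<eta>" \<rho> G] \<open>\<eta> \<le> \<rho>/2\<close> by auto
  qed
qed

lemma chain_end_near:
  assumes "x \<in> G" "chain_succ F x y" "0 < r" "r \<le> e"
  shows "y \<in> nbhd r G"
proof -
  obtain \<rho> n \<epsilon> where "0 < \<rho>" "0 < n" "0 < \<epsilon>"
    and near: "\<And>T \<gamma> u. eps_close F \<epsilon> T \<gamma> \<Longrightarrow> \<gamma> 0 \<in> nbhd \<rho> G \<Longrightarrow> u \<in> {0..real n} \<Longrightarrow>
      u \<le> T \<Longrightarrow> \<gamma> u \<in> nbhd r G"
    and return: "\<And>T \<gamma>. eps_close F \<epsilon> T \<gamma> \<Longrightarrow> \<gamma> 0 \<in> nbhd \<rho> G \<Longrightarrow> real n \<le> T \<Longrightarrow>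
      \<gamma> (real n) \<in> nbhd \<rho> G"
    using shadowing_near_attractor[OF assms(3,4)] by blast
  obtain T \<gamma> where "T \<ge> 1" "\<gamma> 0 = x" "\<gamma> T = y" and close: "eps_close F \<epsilon> T \<gamma>"
    using assms(2) \<open>0 < \<epsilon>\<close> unfolding chain_succ_def eps_chain_def by blast
  have "\<gamma> 0 \<in> nbhd \<rho> G"
    using \<open>\<gamma> 0 = x\<close> assms(1) subset_nbhd[OF \<open>0 < \<rho>\<close>] by blast
  moreover have "\<gamma> (s + real n) \<in> nbhd \<rho> G"
    if "0 \<le> s" "s + real n \<le> T" "\<gamma> s \<in> nbhd \<rho> G" for s
    using return[OF eps_close_shift[OF close \<open>0 \<le> s\<close>]] that by simp
  ultimately obtain s where s: "0 \<le> s" "s \<le> T" "T < s + real n" "\<gamma> s \<in> nbhd \<rho> G"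
    using last_grid_point[of "real n" T "\<lambda>s. \<gamma> s \<in> nbhd \<rho> G"] \<open>0 < n\<close> \<open>T \<ge> 1\<close> by auto
  then have "\<gamma> (s + (T - s)) \<in> nbhd r G"
    using near[OF eps_close_shift[OF close \<open>0 \<le> s\<close>], of "T - s"] by simp
  then show ?thesis
    using \<open>\<gamma> T = y\<close> by simp
qed

lemma chain_succ_in_closure:
  assumes "x \<in> G" "chain_succ F x y"
  shows "y \<in> closure G"
  unfolding closure_approachable
proof (intro allI impI)
  fix \<epsilon> :: real assume "0 < \<epsilon>"
  then have "y \<in> nbhd (min \<epsilon> e) G"
    using chain_end_near[OF assms] e_pos by simp
  then show "\<exists>g\<in>G. dist g y < \<epsilon>"
    unfolding nbhd_def by (auto simp: dist_commute)
qed

end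

theorem proposition3p1:
  fixes F :: "real \<Rightarrow> 'a::metric_space \<Rightarrow> 'a" and G :: "'a set" and x y :: 'a
  assumes "semiflow F"
    and "strong_global_attractor F G"
    and "x \<in> G"
    and "chain_succ F x y"
  shows "y \<in> G"
proof -
  obtain e where "0 < e" "attracts F G (nbhd e G)"
    "uniformly_continuous_on ({0..1} \<times> W_set F e G) (\<lambda>(t, z). F t z)"
    using assms(2) unfolding strong_global_attractor_def by blast
  moreover have "compact G" "invariant F G"
    using assms(2) unfolding strong_global_attractor_def global_attractor_def by auto
  ultimately interpret strongly_attracting_set F G e
    using assms(1) by unfold_locales (auto simp: invariant_def)
  have "y \<in> closure G"
    using chain_succ_in_closure assms(3,4) .
  then show ?thesis
    using \<open>compact G\<close> compact_imp_closed closure_closed by metis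
qed

end
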